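(* Let $G(n,n_1,\dots,n_L,p_1,\dots,p_L)$ be a multi-layer stochastic block model network satisfying the standing assumptions below, let $\mathcal{L}$ be its set of layers, fix a target layer $l^*\in\mathcal{L}$ and let $\mathcal{L}'=\mathcal{L}\setminus\{l^*\}$. If a suitable reducing method is applied to all communities of the layers in $\mathcal{L}'$, then the (expected) modularity of the partition $l^*$ increases.
   Context: Multi-layer stochastic block model $G(n,n_1,\dots,n_L,p_1,\dots,p_L)$: a random graph on $n$ nodes with $L$ layers. For each layer $l$ the nodes are partitioned into $n_l$ planted communities of size $s_l=n/n_l$; independently for each layer, each pair of nodes in a common community of layer $l$ receives an edge from layer $l$ with probability $p_l$; the graph is the simple union of all generated edges. The layers' partitions are independent, a pair of nodes lying in a common community of layer $l$ with probability $1/n_l$ independently over layers (self-pairs allowed for convenience); for $k\ge2$ distinct layers and one community from each, the intersection has $n/(n_{l_1}\cdots n_{l_k})$ nodes in expectation. Standing assumptions: $n_l\ge4$, $p_l\in[0.05,1]$, $n\ge2\prod_l n_l$. Notation: for $T\subseteq\mathcal{L}$, $P(T)=1-\prod_{l\in T}(1-p_l)$ is the probability that some layer in $T$ generates an edge on a pair internal to all layers of $T$ (with $P(\emptyset)=0$). A reducing method applied to the layers of $\mathcal{L}'$ is described by $K:2^{\mathcal{L}'}\to[0,1]$, where $K(T)$ is the probability that an edge on a pair of nodes internal to exactly the layers $T$ among $\mathcal{L}'$ is kept; it is called suitable if for all $T,T'\subseteq\mathcal{L}'$, $P(T)\le P(T')$ implies $K(T)\ge K(T')$. Modularity of layer $l^*$: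 with $e$ edges, $Q=\sum_i\big(\frac{e^i_{in}}{e}-(\frac{d^i}{2e})^2\big)$ over communities $i$ of $l^*$, $e^i_{in}$ the internal edges, $e^i_{out}$ the edges with exactly one endpoint in $i$, $d^i=2e^i_{in}+e^i_{out}$, all counts replaced by their expected values. *)

theory Defs
  imports Main "HOL.Real"
begin

text \<open>P(T) = 1 - prod (1 - p_l): probability that some layer of T generates an edge
  on a pair internal to all layers of T (P of the empty set is 0).\<close>
definition Pun :: "('l \<Rightarrow> real) \<Rightarrow> 'l set \<Rightarrow> real" where
  "Pun p T = 1 - (\<Prod>l\<in>T. 1 - p l)"

text \<open>Probability that a pair of nodes lies in a common community of exactly the
  layers T among the layers A (independent layers, probability 1/n_l each).\<close>
definition exact_prob :: "('l \<Rightarrow> nat) \<Rightarrow> 'l set \<Rightarrow> 'l set \<Rightarrow> real" where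
  "exact_prob nl A T = (\<Prod>l\<in>T. 1 / real (nl l)) * (\<Prod>l\<in>A - T. 1 - 1 / real (nl l))"

definition suitable :: "('l \<Rightarrow> real) \<Rightarrow> 'l set \<Rightarrow> ('l set \<Rightarrow> real) \<Rightarrow> bool" where
  "suitable p A K \<longleftrightarrow> (\<forall>T\<subseteq>A. 0 \<le> K T \<and> K T \<le> 1) \<and>
     (\<forall>T\<subseteq>A. \<forall>T'\<subseteq>A. Pun p T \<le> Pun p T' \<longrightarrow> K T' \<le> K T)"

text \<open>A pair internal to
  community i of ls and to exactly the layers T of Ls - {ls} has an edge with
  probability Pun p (insert ls T) and it is kept with probability K T.
  (Unordered pairs, self-pairs allowed: n^2/2 pairs.)\<close>
definition exp_ein ::
  "nat \<Rightarrow> ('l \<Rightarrow> nat) \<Rightarrow> ('l \<Rightarrow> real) \<Rightarrow> 'l set \<Rightarrow> 'l \<Rightarrow> ('l set \<Rightarrow> real) \<Rightarrow> nat \<Rightarrow> real" where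
  "exp_ein n nl p Ls ls K i =
     (real n ^ 2 / 2) * (1 / real (nl ls)) ^ 2 *
     (\<Sum>T\<in>Pow (Ls - {ls}). exact_prob nl (Ls - {ls}) T * Pun p (insert ls T) * K T)"

definition exp_eout ::
  "nat \<Rightarrow> ('l \<Rightarrow> nat) \<Rightarrow> ('l \<Rightarrow> real) \<Rightarrow> 'l set \<Rightarrow> 'l \<Rightarrow> ('l set \<Rightarrow> real) \<Rightarrow> nat \<Rightarrow> real" where
  "exp_eout n nl p Ls ls K i =
     real n ^ 2 * (1 / real (nl ls)) * (1 - 1 / real (nl ls)) *
     (\<Sum>T\<in>Pow (Ls - {ls}). exact_prob nl (Ls - {ls}) T * Pun p T * K T)"

text \<open>Expected total number of edges: internal edges of all communities of ls plus
  the edges between communities (each counted from both sides).\<close>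
definition exp_edges ::
  "nat \<Rightarrow> ('l \<Rightarrow> nat) \<Rightarrow> ('l \<Rightarrow> real) \<Rightarrow> 'l set \<Rightarrow> 'l \<Rightarrow> ('l set \<Rightarrow> real) \<Rightarrow> real" where
  "exp_edges n nl p Ls ls K =
     (\<Sum>i<nl ls. exp_ein n nl p Ls ls K i + exp_eout n nl p Ls ls K i / 2)"

definition modularity ::
  "nat \<Rightarrow> ('l \<Rightarrow> nat) \<Rightarrow> ('l \<Rightarrow> real) \<Rightarrow> 'l set \<Rightarrow> 'l \<Rightarrow> ('l set \<Rightarrow> real) \<Rightarrow> real" where
  "modularity n nl p Ls ls K =
     (let e = exp_edges n nl p Ls ls K in
      \<Sum>i<nl ls. exp_ein n nl p Ls ls K i / e
        - ((2 * exp_ein n nl p Ls ls K i + exp_eout n nl p Ls ls K i) / (2 * e)) ^ 2)"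

end

theory Submission
  imports Defs
begin

text \<open>Writing I and C for the kept weights of the pairs internal to a community of the
  target layer l* and of the pairs crossing two of its communities, the expected modularity of
  l* is I / (I + (N - 1) C) - 1/N with N the number of communities of l*, so it only grows
  with I / C.  A pair internal to l* already gets an edge from l* with probability p(l*),
  hence I = p(l*) W + (1 - p(l*)) C, where W is the kept weight of all pairs, and it suffices
  to show that W / C does not decrease under the reduction.  A suitable method keeps pairs
  with a larger edge probability P(T) less often, so K and P are oppositely ordered and
  Chebyshev's sum inequality gives W_K C_1 \<ge> W_1 C_K.\<close>

lemma Chebyshev_sum_upper_weighted:
  fixes w f g :: "'a \<Rightarrow> real"
  assumes "\<And>x. x \<in> S \<Longrightarrow> 0 \<le> w x"
    and "\<And>x y. x \<in> S \<Longrightarrow> y \<in> S \<Longrightarrow> (f x - f y) * (g x - g y) \<le> 0"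
  shows "(\<Sum>x\<in>S. w x) * (\<Sum>x\<in>S. w x * f x * g x) \<le> (\<Sum>x\<in>S. w x * f x) * (\<Sum>x\<in>S. w x * g x)"
proof -
  have expand: "w x * w y * ((f x - f y) * (g x - g y)) =
      (w x * f x * g x) * w y + w x * (w y * f y * g y) - (w x * f x) * (w y * g y) - (w x * g x) * (w y * f y)"
    for x y by (simp add: algebra_simps)
  have "(\<Sum>x\<in>S. \<Sum>y\<in>S. w x * w y * ((f x - f y) * (g x - g y)))
      = 2 * ((\<Sum>x\<in>S. w x) * (\<Sum>x\<in>S. w x * f x * g x) - (\<Sum>x\<in>S. w x * f x) * (\<Sum>x\<in>S. w x * g x))"
    unfolding expand sum_subtractf sum.distrib sum_product[symmetric] by (simp add: algebra_simps)
  moreover have "(\<Sum>x\<in>S. \<Sum>y\<in>S. w x * w y * ((f x - f y) * (g x - g y))) \<le> 0"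
    by (intro sum_nonpos) (simp add: assms mult_nonneg_nonpos)
  ultimately show ?thesis by simp
qed

lemma frac_add_mult_mono:
  fixes a b a' b' c :: real
  assumes "0 \<le> c" and "0 < a + c * b" and "0 < a' + c * b'" and "a * b' \<le> a' * b"
  shows "a / (a + c * b) \<le> a' / (a' + c * b')"
proof -
  have "a * (a' + c * b') \<le> a' * (a + c * b)"
    using mult_left_mono[OF assms(4) assms(1)] by (simp add: algebra_simps)
  then show ?thesis using assms(2,3) by (simp add: divide_simps)
qed

lemma Pun_nonneg:
  assumes "\<And>l. l \<in> T \<Longrightarrow> 0 \<le> p l \<and> p l \<le> 1"
  shows "0 \<le> Pun p T"
  unfolding Pun_def using assms by (simp add: prod_le_1)

lemma Pun_insert:
  assumes "finite T" and "l \<notin> T"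
  shows "Pun p (insert l T) = p l + (1 - p l) * Pun p T"
  using assms by (simp add: Pun_def algebra_simps)

lemma exact_prob_nonneg: "0 \<le> exact_prob nl A T"
proof -
  have "1 / real m \<le> 1" for m :: nat
    by (cases m) simp_all
  then show ?thesis
    unfolding exact_prob_def by (intro mult_nonneg_nonneg prod_nonneg) simp_all
qed

lemma suitable_oppositely_ordered:
  assumes "suitable p A K" and "T \<subseteq> A" and "T' \<subseteq> A"
  shows "(K T - K T') * (Pun p T - Pun p T') \<le> 0"
proof (cases "Pun p T \<le> Pun p T'")
  case True
  then have "K T' \<le> K T" using assms unfolding suitable_def by blast
  with True show ?thesis by (simp add: mult_nonneg_nonpos)
next
  case False
  then have "K T \<le> K T'" using assms unfolding suitable_def by force
  with False show ?thesis by (simp add: mult_nonpos_nonneg)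
qed

definition kept_weight :: "('l \<Rightarrow> nat) \<Rightarrow> 'l set \<Rightarrow> ('l set \<Rightarrow> real) \<Rightarrow> real" where
  "kept_weight nl A K = (\<Sum>T\<in>Pow A. exact_prob nl A T * K T)"

definition crossing_weight :: "('l \<Rightarrow> nat) \<Rightarrow> ('l \<Rightarrow> real) \<Rightarrow> 'l set \<Rightarrow> ('l set \<Rightarrow> real) \<Rightarrow> real" where
  "crossing_weight nl p A K = (\<Sum>T\<in>Pow A. exact_prob nl A T * Pun p T * K T)"

definition internal_weight ::
  "('l \<Rightarrow> nat) \<Rightarrow> ('l \<Rightarrow> real) \<Rightarrow> 'l set \<Rightarrow> 'l \<Rightarrow> ('l set \<Rightarrow> real) \<Rightarrow> real" where
  "internal_weight nl p A l K = (\<Sum>T\<in>Pow A. exact_prob nl A T * Pun p (insert l T) * K T)"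

lemma internal_weight_eq:
  assumes "finite A" and "l \<notin> A"
  shows "internal_weight nl p A l K = p l * kept_weight nl A K + (1 - p l) * crossing_weight nl p A K"
proof -
  have Pun_insert_l: "Pun p (insert l T) = p l + (1 - p l) * Pun p T" if "T \<subseteq> A" for T
    using that assms by (intro Pun_insert) (auto intro: finite_subset)
  have "internal_weight nl p A l K = (\<Sum>T\<in>Pow A.
      p l * (exact_prob nl A T * K T) + (1 - p l) * (exact_prob nl A T * Pun p T * K T))"
    unfolding internal_weight_def by (intro sum.cong) (simp_all add: Pun_insert_l algebra_simps)
  then show ?thesis
    unfolding kept_weight_def crossing_weight_def by (simp add: sum.distrib sum_distrib_left)
qed

lemma kept_crossing_cross_le:
  assumes "finite A" and "suitable p A K"
  shows "kept_weight nl A (\<lambda>_. 1) * crossing_weight nl p A K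
    \<le> kept_weight nl A K * crossing_weight nl p A (\<lambda>_. 1)"
proof -
  have "(\<Sum>T\<in>Pow A. exact_prob nl A T) * (\<Sum>T\<in>Pow A. exact_prob nl A T * K T * Pun p T)
      \<le> (\<Sum>T\<in>Pow A. exact_prob nl A T * K T) * (\<Sum>T\<in>Pow A. exact_prob nl A T * Pun p T)"
    using assms(2) by (intro Chebyshev_sum_upper_weighted exact_prob_nonneg suitable_oppositely_ordered) auto
  then show ?thesis
    unfolding kept_weight_def crossing_weight_def by (simp add: mult.commute mult.left_commute)
qed

lemma internal_crossing_cross_le:
  assumes "finite A" and "l \<notin> A" and "0 \<le> p l" and "suitable p A K"
  shows "internal_weight nl p A l (\<lambda>_. 1) * crossing_weight nl p A K
    \<le> internal_weight nl p A l K * crossing_weight nl p A (\<lambda>_. 1)"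
proof -
  have "internal_weight nl p A l K * crossing_weight nl p A (\<lambda>_. 1)
      - internal_weight nl p A l (\<lambda>_. 1) * crossing_weight nl p A K
    = p l * (kept_weight nl A K * crossing_weight nl p A (\<lambda>_. 1)
      - kept_weight nl A (\<lambda>_. 1) * crossing_weight nl p A K)"
    using assms(1,2) by (simp add: internal_weight_eq algebra_simps)
  moreover have "0 \<le> p l * (kept_weight nl A K * crossing_weight nl p A (\<lambda>_. 1)
      - kept_weight nl A (\<lambda>_. 1) * crossing_weight nl p A K)"
    using assms(3) kept_crossing_cross_le[OF assms(1,4)] by simp
  ultimately show ?thesis by simp
qed

lemma internal_crossing_weight_mono:
  assumes "\<And>l. l \<in> insert l\<^sub>0 A \<Longrightarrow> 0 \<le> p l \<and> p l \<le> 1"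
    and "\<And>T. T \<subseteq> A \<Longrightarrow> K T \<le> K' T"
  shows "internal_weight nl p A l\<^sub>0 K \<le> internal_weight nl p A l\<^sub>0 K'"
    and "crossing_weight nl p A K \<le> crossing_weight nl p A K'"
proof -
  have "0 \<le> exact_prob nl A T * Pun p (insert l\<^sub>0 T)" "0 \<le> exact_prob nl A T * Pun p T"
    if "T \<subseteq> A" for T
    using that assms(1) by (auto intro!: mult_nonneg_nonneg exact_prob_nonneg Pun_nonneg)
  then show "internal_weight nl p A l\<^sub>0 K \<le> internal_weight nl p A l\<^sub>0 K'"
    and "crossing_weight nl p A K \<le> crossing_weight nl p A K'"
    unfolding internal_weight_def crossing_weight_def
    by (auto intro!: sum_mono mult_left_mono assms(2) simp flip: mult.assoc)
qed

lemma exp_ein_eq: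
  "exp_ein n nl p Ls ls K i
    = real n ^ 2 / 2 * (1 / real (nl ls)) ^ 2 * internal_weight nl p (Ls - {ls}) ls K"
  unfolding exp_ein_def internal_weight_def ..

lemma exp_eout_eq:
  "exp_eout n nl p Ls ls K i
    = real n ^ 2 * (1 / real (nl ls)) * (1 - 1 / real (nl ls)) * crossing_weight nl p (Ls - {ls}) K"
  unfolding exp_eout_def crossing_weight_def ..

lemma exp_edges_eq:
  "exp_edges n nl p Ls ls K = real n ^ 2 / (2 * real (nl ls)) *
    (internal_weight nl p (Ls - {ls}) ls K + (real (nl ls) - 1) * crossing_weight nl p (Ls - {ls}) K)"
  by (cases "nl ls = 0") (simp_all add: exp_edges_def exp_ein_eq exp_eout_eq field_simps power2_eq_square)

lemma internal_add_crossing_pos: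
  assumes "0 < exp_edges n nl p Ls ls K"
  shows "0 < internal_weight nl p (Ls - {ls}) ls K + (real (nl ls) - 1) * crossing_weight nl p (Ls - {ls}) K"
  using assms unfolding exp_edges_eq by (auto simp: zero_less_mult_iff zero_less_divide_iff)

lemma modularity_eq:
  assumes "0 < exp_edges n nl p Ls ls K"
  defines "I \<equiv> internal_weight nl p (Ls - {ls}) ls K" and "C \<equiv> crossing_weight nl p (Ls - {ls}) K"
    and "N \<equiv> real (nl ls)"
  shows "modularity n nl p Ls ls K = I / (I + (N - 1) * C) - 1 / N"
proof -
  define e where "e = exp_edges n nl p Ls ls K"
  have "nl ls \<noteq> 0"
    using assms(1) by (cases "nl ls = 0") (simp_all add: exp_edges_def)
  then have N: "N > 0"
    by (simp add: N_def)
  have "n \<noteq> 0"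
    using assms(1) by (cases "n = 0") (simp_all add: exp_edges_def exp_ein_def exp_eout_def)
  have D: "0 < I + (N - 1) * C"
    using internal_add_crossing_pos[OF assms(1)] by (simp add: I_def C_def N_def)
  define c where "c = real n ^ 2 / (2 * N)"
  have "c > 0"
    using N \<open>n \<noteq> 0\<close> by (simp add: c_def)
  have e: "e = c * (I + (N - 1) * C)"
    by (simp add: e_def c_def exp_edges_eq I_def C_def N_def)
  have ein: "exp_ein n nl p Ls ls K i = c * I / N"
    and ein_eout: "2 * exp_ein n nl p Ls ls K i + exp_eout n nl p Ls ls K i = 2 * e / N" for i
    using N unfolding e
    by (simp_all add: exp_ein_eq exp_eout_eq I_def C_def N_def c_def field_simps power2_eq_square)
  have "exp_ein n nl p Ls ls K i / e = I / (I + (N - 1) * C) / N" for i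
    using \<open>c > 0\<close> unfolding ein e by simp
  moreover have "(2 * exp_ein n nl p Ls ls K i + exp_eout n nl p Ls ls K i) / (2 * e) = 1 / N" for i
    using \<open>c > 0\<close> D unfolding ein_eout e by simp
  ultimately have "modularity n nl p Ls ls K = N * (I / (I + (N - 1) * C) / N - (1 / N) ^ 2)"
    by (simp add: modularity_def e_def[symmetric] N_def[symmetric])
  also have "\<dots> = I / (I + (N - 1) * C) - 1 / N"
    using N by (simp add: right_diff_distrib power2_eq_square)
  finally show ?thesis .
qed

theorem theorem16:
  fixes n :: nat and nl :: "'l \<Rightarrow> nat" and p :: "'l \<Rightarrow> real"
    and Ls :: "'l set" and ls :: 'l and K :: "'l set \<Rightarrow> real"
  assumes "finite Ls" and "ls \<in> Ls"
    and "\<forall>l\<in>Ls. nl l \<ge> 4"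
    and "\<forall>l\<in>Ls. 0.05 \<le> p l \<and> p l \<le> 1"
    and "\<forall>l\<in>Ls. nl l dvd n"
    and "n \<ge> 2 * (\<Prod>l\<in>Ls. nl l)"
    and "suitable p (Ls - {ls}) K"
    and "exp_edges n nl p Ls ls K > 0"
  shows "modularity n nl p Ls ls K \<ge> modularity n nl p Ls ls (\<lambda>_. 1)"
  \<comment> \<open>The assumptions on n only make the model realisable; the expected counts do not need them.\<close>
proof -
  let ?A = "Ls - {ls}" and ?N = "real (nl ls)"
  have p_unit: "0 \<le> p l \<and> p l \<le> 1" if "l \<in> insert ls ?A" for l
    using assms(2,4) that by force
  have N: "1 \<le> ?N"
    using assms(2,3) by force
  have "exp_edges n nl p Ls ls K \<le> exp_edges n nl p Ls ls (\<lambda>_. 1)"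
    using assms(7) N unfolding exp_edges_eq suitable_def
    by (intro mult_left_mono add_mono internal_crossing_weight_mono p_unit) auto
  with assms(8) have unreduced_pos: "0 < exp_edges n nl p Ls ls (\<lambda>_. 1)"
    by linarith
  have "internal_weight nl p ?A ls (\<lambda>_. 1) * crossing_weight nl p ?A K
      \<le> internal_weight nl p ?A ls K * crossing_weight nl p ?A (\<lambda>_. 1)"
    using assms(1,7) p_unit by (intro internal_crossing_cross_le) auto
  then have "internal_weight nl p ?A ls (\<lambda>_. 1) /
        (internal_weight nl p ?A ls (\<lambda>_. 1) + (?N - 1) * crossing_weight nl p ?A (\<lambda>_. 1))
      \<le> internal_weight nl p ?A ls K /
        (internal_weight nl p ?A ls K + (?N - 1) * crossing_weight nl p ?A K)"
    using N unreduced_pos assms(8) by (intro frac_add_mult_mono internal_add_crossing_pos) simp_all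
  then show ?thesis
    by (simp add: modularity_eq unreduced_pos assms(8))
qed

end
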